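(* Let $\Sigma$ be a finite alphabet with at least two letters. The automatic topology on $T_\Sigma^\omega$, i.e. the topology generated by the regular tree languages that are closed for the Cantor topology on $T_\Sigma^\omega$, is Polish.
   Context: $T_\Sigma^\omega$ is the set of maps $\{l,r\}^*\to\Sigma$ with the Cantor topology (distance $2^{-n}$, $n$ the least length of a node where two trees differ). A regular tree language is one accepted by a Muller tree automaton $(\Sigma,Q,q_0,\Delta,\mathcal{F})$ with $\Delta\subseteq Q\times\Sigma\times Q\times Q$, $\mathcal{F}\subseteq 2^Q$: a run $\rho:\{l,r\}^*\to Q$ satisfies $\rho(\text{root})=q_0$ and $(\rho(u),t(u),\rho(ul),\rho(ur))\in\Delta$, and is accepting if for each infinite branch the set of states occurring infinitely often on it is in $\mathcal{F}$. *)

theory Defs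
  imports "HOL-Analysis.Analysis"
begin

text \<open>Infinite binary trees over alphabet 'a: maps from nodes (words over {l,r},
  encoded as bool lists, False = l, True = r) to letters.\<close>
type_synonym 'a tree = "bool list \<Rightarrow> 'a"

text \<open>Closedness in the Cantor topology (distance 2^-n, n the least length of a node
  where two trees differ): a limit of trees from L, i.e. a tree all of whose finite
  truncations are matched by trees in L, belongs to L.\<close>
definition cantor_closed :: "'a tree set \<Rightarrow> bool" where
  "cantor_closed L \<longleftrightarrow>
     (\<forall>t. (\<forall>n. \<exists>s\<in>L. \<forall>u. length u < n \<longrightarrow> s u = t u) \<longrightarrow> t \<in> L)"

record 'a muller_tree_automaton =
  states :: "nat set"
  init :: nat
  trans :: "(nat \<times> 'a \<times> nat \<times> nat) set"
  table :: "nat set set"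

definition wf_mta :: "'a muller_tree_automaton \<Rightarrow> bool" where
  "wf_mta A \<longleftrightarrow> finite (states A) \<and> init A \<in> states A \<and>
     trans A \<subseteq> states A \<times> UNIV \<times> states A \<times> states A \<and>
     table A \<subseteq> Pow (states A)"

definition is_run :: "'a muller_tree_automaton \<Rightarrow> 'a tree \<Rightarrow> (bool list \<Rightarrow> nat) \<Rightarrow> bool" where
  "is_run A t \<rho> \<longleftrightarrow> \<rho> [] = init A \<and>
     (\<forall>u. (\<rho> u, t u, \<rho> (u @ [False]), \<rho> (u @ [True])) \<in> trans A)"

text \<open>An infinite branch is given by a direction sequence pi; its n-th node is the
  prefix of length n.\<close>
definition inf_states :: "(bool list \<Rightarrow> nat) \<Rightarrow> (nat \<Rightarrow> bool) \<Rightarrow> nat set" where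
  "inf_states \<rho> \<pi> = {q. \<exists>\<^sub>\<infinity>n. \<rho> (map \<pi> [0..<n]) = q}"

definition accepting_run :: "'a muller_tree_automaton \<Rightarrow> (bool list \<Rightarrow> nat) \<Rightarrow> bool" where
  "accepting_run A \<rho> \<longleftrightarrow> (\<forall>\<pi>. inf_states \<rho> \<pi> \<in> table A)"

definition tree_lang :: "'a muller_tree_automaton \<Rightarrow> 'a tree set" where
  "tree_lang A = {t. \<exists>\<rho>. is_run A t \<rho> \<and> accepting_run A \<rho>}"

definition regular_tree_language :: "'a tree set \<Rightarrow> bool" where
  "regular_tree_language L \<longleftrightarrow> (\<exists>A. wf_mta A \<and> L = tree_lang A)"

definition automatic_topology :: "'a tree topology" where
  "automatic_topology =
     topology_generated_by {L. regular_tree_language L \<and> cantor_closed L}"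

definition Polish_space :: "'b topology \<Rightarrow> bool" where
  "Polish_space X \<longleftrightarrow> completely_metrizable_space X \<and> separable_space X"

end

theory Submission
  imports Defs
begin

text \<open>The cylinders {t. t u = a} are regular and closed, so the automatic topology refines the
  Cantor topology, which is Polish. There are only countably many regular languages, so the
  automatic topology is second countable, and it arises from the Cantor topology by declaring
  countably many closed sets open. Such a refinement of a completely metrizable topology stays
  completely metrizable: it is homeomorphic to the graph of x \<mapsto> (\<lambda>L. x \<in> L), a G-delta
  subset of the product of the original space with a countable power of the discrete space bool.\<close>

lemma continuous_map_to_discrete_topology:
  fixes f :: "'a \<Rightarrow> 'b"
  assumes "\<And>y. openin X {x \<in> topspace X. f x = y}"
  shows "continuous_map X (discrete_topology UNIV) f"
  unfolding continuous_map_def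
proof (intro conjI allI impI)
  fix V :: "'b set"
  have "{x \<in> topspace X. f x \<in> V} = (\<Union>y\<in>V. {x \<in> topspace X. f x = y})" by auto
  then show "openin X {x \<in> topspace X. f x \<in> V}"
    using assms by (auto intro: openin_Union)
qed simp

lemma second_countable_topology_generated_by:
  assumes "countable S"
  shows "second_countable (topology_generated_by S)"
proof -
  let ?B = "Collect (finite' intersection_of (\<lambda>x. x \<in> S))"
  have "?B \<subseteq> Inter ` {F. finite F \<and> F \<subseteq> S}"
    by (auto simp: intersection_of_def)
  then have "countable ?B"
    by (rule countable_subset) (intro countable_image countable_Collect_finite_subset assms)
  moreover have "openin (topology_generated_by S) = generate_topology_on S"
    by (rule ext) (rule openin_topology_generated_by_iff)
  then have "openin (topology_generated_by S) = arbitrary union_of (\<lambda>x. x \<in> ?B)"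
    by (simp add: generate_topology_on_eq)
  ultimately show ?thesis
    unfolding second_countable by blast
qed

lemma openin_prod_topology_coordinate:
  fixes Y :: "'a topology" and I :: "'i set"
  defines "Z \<equiv> prod_topology Y (product_topology (\<lambda>_. discrete_topology (UNIV :: bool set)) I)"
  assumes "i \<in> I"
  shows "openin Z {p \<in> topspace Z. snd p i}"
proof -
  have "continuous_map Z (discrete_topology UNIV) (\<lambda>p. snd p i)"
    unfolding Z_def
    using continuous_map_compose[OF continuous_map_snd continuous_map_product_projection[OF assms(2)]]
    by (simp add: o_def)
  from openin_continuous_map_preimage[OF this, of "{True}"] show ?thesis
    by simp
qed

lemma gdelta_in_membership_graph:
  fixes Y :: "'a topology" and S :: "'a set set"
  defines "Z \<equiv> prod_topology Y (product_topology (\<lambda>_. discrete_topology (UNIV :: bool set)) S)"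
  assumes Y: "metrizable_space Y" and S: "countable S"
    and closed: "\<And>L. L \<in> S \<Longrightarrow> closedin Y L"
  shows "gdelta_in Z ((\<lambda>x. (x, restrict (\<lambda>L. x \<in> L) S)) ` topspace Y)"
proof -
  have tZ: "topspace Z = topspace Y \<times> (S \<rightarrow>\<^sub>E UNIV)"
    by (simp add: Z_def)
  have "metrizable_space Z"
    using Y S unfolding Z_def
    by (simp add: metrizable_space_prod_topology metrizable_space_product_topology)
  define G where "G L = {p \<in> topspace Z. snd p L = (fst p \<in> L)}" for L
  have "gdelta_in Z (G L)" if "L \<in> S" for L
  proof -
    let ?In = "{p \<in> topspace Z. snd p L}" and ?Out = "{p \<in> topspace Z. fst p \<notin> L}"
    have "openin Z ?In"
      unfolding Z_def using that by (rule openin_prod_topology_coordinate)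
    moreover have "openin Z ?Out"
    proof -
      have "openin Z {p \<in> topspace Z. fst p \<in> topspace Y - L}"
        using closed[OF that] unfolding Z_def closedin_def
        by (intro openin_continuous_map_preimage[OF continuous_map_fst]) simp
      moreover have "{p \<in> topspace Z. fst p \<in> topspace Y - L} = ?Out"
        by (auto simp: tZ)
      ultimately show ?thesis by simp
    qed
    ultimately have "gdelta_in Z (?In \<union> ?Out)" and "gdelta_in Z (topspace Z - ?In \<inter> ?Out)"
      using \<open>metrizable_space Z\<close> by (auto intro: open_imp_gdelta_in closed_imp_gdelta_in)
    then have "gdelta_in Z ((?In \<union> ?Out) \<inter> (topspace Z - ?In \<inter> ?Out))"
      by (rule gdelta_in_Int)
    moreover have "(?In \<union> ?Out) \<inter> (topspace Z - ?In \<inter> ?Out) = G L"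
      by (auto simp: G_def)
    ultimately show ?thesis by simp
  qed
  then have "gdelta_in Z (\<Inter> (insert (topspace Z) (G ` S)))"
    by (intro gdelta_in_Inter) (use S in auto)
  moreover have "\<Inter> (insert (topspace Z) (G ` S)) = (\<lambda>x. (x, restrict (\<lambda>L. x \<in> L) S)) ` topspace Y"
  proof (intro equalityI subsetI)
    fix p assume p: "p \<in> \<Inter> (insert (topspace Z) (G ` S))"
    then have "snd p = restrict (\<lambda>L. fst p \<in> L) S"
      by (force simp: tZ G_def PiE_def extensional_def fun_eq_iff)
    with p show "p \<in> (\<lambda>x. (x, restrict (\<lambda>L. x \<in> L) S)) ` topspace Y"
      by (auto simp: tZ image_iff prod_eq_iff)
  qed (auto simp: tZ G_def)
  ultimately show ?thesis by simp
qed

lemma homeomorphic_space_membership_graph: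
  fixes Y :: "'a topology" and S :: "'a set set"
  defines "Z \<equiv> prod_topology Y (product_topology (\<lambda>_. discrete_topology (UNIV :: bool set)) S)"
  assumes closed: "\<And>L. L \<in> S \<Longrightarrow> closedin Y L"
    and finer: "\<And>U. openin Y U \<Longrightarrow> openin (topology_generated_by S) U"
  shows "topology_generated_by S homeomorphic_space
           subtopology Z ((\<lambda>x. (x, restrict (\<lambda>L. x \<in> L) S)) ` topspace Y)"
proof -
  define X where "X = topology_generated_by S"
  define \<phi> where "\<phi> x = (x, restrict (\<lambda>L. x \<in> L) S)" for x
  define R where "R = \<phi> ` topspace Y"
  have "topspace Y \<subseteq> topspace X"
    using finer[OF openin_topspace] unfolding X_def by (rule openin_subset)
  moreover have "topspace X \<subseteq> topspace Y"
    using closed closedin_subset unfolding X_def by auto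
  ultimately have tX: "topspace X = topspace Y" by blast
  have tR: "topspace (subtopology Z R) = R"
    by (auto simp: Z_def R_def \<phi>_def)
  have "continuous_map X Y (\<lambda>x. x)"
    unfolding continuous_map_def
  proof (intro conjI allI impI)
    fix U assume "openin Y U"
    moreover have "{x \<in> topspace X. x \<in> U} = U"
      using \<open>openin Y U\<close> openin_subset tX by blast
    ultimately show "openin X {x \<in> topspace X. x \<in> U}"
      using finer unfolding X_def by simp
  qed (use tX in auto)
  moreover have "continuous_map X (discrete_topology UNIV) (\<lambda>x. x \<in> L)" if "L \<in> S" for L
  proof (rule continuous_map_to_discrete_topology)
    fix b
    have "openin X L" and "openin X (topspace Y - L)"
      using that closed[OF that] finer unfolding X_def
      by (simp_all add: topology_generated_by_Basis closedin_def)
    moreover have "{x \<in> topspace X. (x \<in> L) = b} = (if b then L else topspace Y - L)"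
      using that closed closedin_subset tX by auto
    ultimately show "openin X {x \<in> topspace X. (x \<in> L) = b}"
      by simp
  qed
  ultimately have "continuous_map X Z \<phi>"
    unfolding Z_def \<phi>_def continuous_map_paired
    by (auto simp: continuous_map_componentwise)
  then have \<phi>_cont: "continuous_map X (subtopology Z R) \<phi>"
    by (rule continuous_map_into_subtopology) (auto simp: R_def tX)
  have fst_cont: "continuous_map (subtopology Z R) X fst"
    unfolding X_def continuous_on_generated_topo_iff
  proof (intro conjI allI impI)
    fix U assume "U \<in> S"
    then have "fst -` U \<inter> topspace (subtopology Z R) = R \<inter> {p \<in> topspace Z. snd p U}"
      by (auto simp: tR R_def \<phi>_def Z_def)
    then show "openin (subtopology Z R) (fst -` U \<inter> topspace (subtopology Z R))"
      using openin_prod_topology_coordinate[OF \<open>U \<in> S\<close>, of Y]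
      by (simp add: openin_subtopology_Int2 Z_def)
  qed (use tR tX in \<open>auto simp: R_def \<phi>_def X_def\<close>)
  have "homeomorphic_maps X (subtopology Z R) \<phi> fst"
    unfolding homeomorphic_maps_def using \<phi>_cont fst_cont
    by (auto simp: tR tX R_def \<phi>_def)
  then show ?thesis
    unfolding homeomorphic_space_def X_def R_def \<phi>_def by blast
qed

lemma completely_metrizable_space_topology_generated_by_closedin:
  assumes Y: "completely_metrizable_space Y" and S: "countable S"
    and closed: "\<And>L. L \<in> S \<Longrightarrow> closedin Y L"
    and finer: "\<And>U. openin Y U \<Longrightarrow> openin (topology_generated_by S) U"
  shows "completely_metrizable_space (topology_generated_by S)"
proof -
  let ?Z = "prod_topology Y (product_topology (\<lambda>_. discrete_topology (UNIV :: bool set)) S)"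
  let ?R = "(\<lambda>x. (x, restrict (\<lambda>L. x \<in> L) S)) ` topspace Y"
  have "completely_metrizable_space ?Z"
    using Y S by (simp add: completely_metrizable_space_prod_topology
        completely_metrizable_space_product_topology completely_metrizable_space_discrete_topology)
  moreover have "gdelta_in ?Z ?R"
    using Y S closed by (intro gdelta_in_membership_graph completely_metrizable_imp_metrizable_space)
  ultimately have "completely_metrizable_space (subtopology ?Z ?R)"
    by (rule completely_metrizable_space_gdelta_in)
  moreover have "topology_generated_by S homeomorphic_space subtopology ?Z ?R"
    using closed finer by (rule homeomorphic_space_membership_graph)
  ultimately show ?thesis
    by (metis homeomorphic_completely_metrizable_space)
qed

definition cantor_topology :: "'a tree topology" where
  "cantor_topology = product_topology (\<lambda>_. discrete_topology UNIV) UNIV"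

lemma topspace_cantor_topology [simp]: "topspace cantor_topology = UNIV"
  by (simp add: cantor_topology_def)

lemma completely_metrizable_space_cantor_topology: "completely_metrizable_space cantor_topology"
  by (simp add: cantor_topology_def completely_metrizable_space_product_topology
      completely_metrizable_space_discrete_topology)

definition cylinder :: "bool list \<Rightarrow> 'a \<Rightarrow> 'a tree set" where
  "cylinder u a = {t. t u = a}"

lemma openin_cantor_topology_cylinder: "openin cantor_topology (cylinder u a)"
proof -
  have "openin cantor_topology {t \<in> topspace cantor_topology. t u \<in> {a}}"
    unfolding cantor_topology_def
    by (rule openin_continuous_map_preimage[OF continuous_map_product_projection]) auto
  then show ?thesis
    by (simp add: cylinder_def)
qed

lemma cantor_closed_imp_closedin:
  assumes "cantor_closed L"
  shows "closedin cantor_topology L"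
  unfolding closedin_def
proof (intro conjI)
  show "openin cantor_topology (topspace cantor_topology - L)"
  proof (subst openin_subopen, intro ballI)
    fix t assume "t \<in> topspace cantor_topology - L"
    then have "t \<notin> L" by simp
    with assms obtain m where m: "\<not> (\<exists>s\<in>L. \<forall>u. length u < m \<longrightarrow> s u = t u)"
      unfolding cantor_closed_def by blast
    define N where "N = (\<Inter>u\<in>{u. length u \<le> m}. cylinder u (t u))"
    have "openin cantor_topology N"
      unfolding N_def
    proof (rule openin_Inter)
      show "finite ((\<lambda>u. cylinder u (t u)) ` {u. length u \<le> m})"
        using finite_lists_length_le[of "UNIV :: bool set" m] by simp
      show "(\<lambda>u. cylinder u (t u)) ` {u. length u \<le> m} \<noteq> {}"
        by (metis (mono_tags) empty_iff image_eqI le0 list.size(3) mem_Collect_eq)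
    qed (auto simp: openin_cantor_topology_cylinder)
    moreover have "t \<in> N" and "N \<subseteq> topspace cantor_topology - L"
      using m by (auto simp: N_def cylinder_def)
    ultimately show "\<exists>N. openin cantor_topology N \<and> t \<in> N \<and> N \<subseteq> topspace cantor_topology - L"
      by blast
  qed
qed simp

lemma openin_if_cylinders_openin:
  assumes "topspace X = UNIV" and "\<And>u a. openin X (cylinder u a)"
    and "openin cantor_topology U"
  shows "openin X U"
proof -
  have "continuous_map X cantor_topology (\<lambda>t. t)"
    unfolding cantor_topology_def continuous_map_componentwise_UNIV
  proof
    fix u
    show "continuous_map X (discrete_topology UNIV) (\<lambda>t. t u)"
      by (rule continuous_map_to_discrete_topology)
        (use assms(1,2) in \<open>simp add: cylinder_def\<close>)
  qed
  from openin_continuous_map_preimage[OF this assms(3)] show ?thesis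
    by (simp add: assms(1))
qed

text \<open>State Suc k marks the node of depth k on the path to u and 0 every node off that
  path; the letter a is enforced at u itself.\<close>
definition cylinder_automaton :: "bool list \<Rightarrow> 'a \<Rightarrow> 'a muller_tree_automaton" where
  "cylinder_automaton u a = \<lparr>states = {0..Suc (length u)}, init = 1,
     trans = {(0, b, 0, 0) | b. True} \<union>
       {(Suc k, b, if u ! k then 0 else Suc (Suc k), if u ! k then Suc (Suc k) else 0) | k b.
          k < length u} \<union>
       {(Suc (length u), a, 0, 0)},
     table = {{0}}\<rparr>"

lemma wf_mta_cylinder_automaton: "wf_mta (cylinder_automaton u a)"
  unfolding wf_mta_def cylinder_automaton_def by auto

lemma take_Suc_length_eq_snoc_iff:
  "take (Suc (length v)) u = v @ [c] \<longleftrightarrow>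
     take (length v) u = v \<and> length v < length u \<and> u ! length v = c"
proof (cases "length v < length u")
  case True
  then show ?thesis by (auto simp: take_Suc_conv_app_nth)
next
  case False
  then show ?thesis by auto
qed

lemma inf_states_eventually_const:
  assumes "\<And>n. n \<ge> N \<Longrightarrow> \<rho> (map \<pi> [0..<n]) = q"
  shows "inf_states \<rho> \<pi> = {q}"
proof -
  have "(\<exists>\<^sub>\<infinity>n. \<rho> (map \<pi> [0..<n]) = p) \<longleftrightarrow> p = q" for p
  proof
    assume "\<exists>\<^sub>\<infinity>n. \<rho> (map \<pi> [0..<n]) = p"
    then obtain n where "n \<ge> N" and "\<rho> (map \<pi> [0..<n]) = p"
      unfolding INFM_nat_le by blast
    then show "p = q" using assms by simp
  next
    assume "p = q"
    then show "\<exists>\<^sub>\<infinity>n. \<rho> (map \<pi> [0..<n]) = p"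
      unfolding INFM_nat_le using assms by (metis max.cobounded1 max.cobounded2)
  qed
  then show ?thesis
    unfolding inf_states_def by auto
qed

lemma cylinder_subset_tree_lang: "cylinder u a \<subseteq> tree_lang (cylinder_automaton u a)"
proof
  fix t assume "t \<in> cylinder u a"
  then have t_u: "t u = a" by (simp add: cylinder_def)
  define \<rho> where "\<rho> v = (if take (length v) u = v then Suc (length v) else 0)" for v
  have "(\<rho> v, t v, \<rho> (v @ [False]), \<rho> (v @ [True])) \<in> trans (cylinder_automaton u a)" for v
  proof (cases "take (length v) u = v")
    case on_path: True
    show ?thesis
    proof (cases "length v < length u")
      case True
      with on_path show ?thesis
        by (cases "u ! length v")
          (simp_all add: \<rho>_def take_Suc_length_eq_snoc_iff cylinder_automaton_def)
    next
      case False
      with on_path have "v = u" by simp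
      then show ?thesis
        by (simp add: \<rho>_def take_Suc_length_eq_snoc_iff cylinder_automaton_def t_u)
    qed
  next
    case False
    then show ?thesis
      by (simp add: \<rho>_def take_Suc_length_eq_snoc_iff cylinder_automaton_def)
  qed
  then have "is_run (cylinder_automaton u a) t \<rho>"
    by (simp add: is_run_def \<rho>_def cylinder_automaton_def)
  moreover have "inf_states \<rho> \<pi> = {0}" for \<pi>
    by (rule inf_states_eventually_const[of "Suc (length u)"]) (auto simp: \<rho>_def)
  then have "accepting_run (cylinder_automaton u a) \<rho>"
    by (simp add: accepting_run_def cylinder_automaton_def)
  ultimately show "t \<in> tree_lang (cylinder_automaton u a)"
    unfolding tree_lang_def by blast
qed

lemma tree_lang_subset_cylinder: "tree_lang (cylinder_automaton u a) \<subseteq> cylinder u a"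
proof
  fix t assume "t \<in> tree_lang (cylinder_automaton u a)"
  then obtain \<rho> where "is_run (cylinder_automaton u a) t \<rho>"
    unfolding tree_lang_def by blast
  then have root: "\<rho> [] = 1"
    and step: "\<And>v. (\<rho> v, t v, \<rho> (v @ [False]), \<rho> (v @ [True])) \<in> trans (cylinder_automaton u a)"
    by (auto simp: is_run_def cylinder_automaton_def)
  have "\<rho> (take k u) = Suc k" if "k \<le> length u" for k
    using that
  proof (induction k)
    case 0
    then show ?case using root by simp
  next
    case (Suc k)
    then have "k < length u" by simp
    moreover have "(Suc k, t (take k u), \<rho> (take k u @ [False]), \<rho> (take k u @ [True]))
        \<in> trans (cylinder_automaton u a)"
      using step[of "take k u"] Suc by simp
    ultimately show ?case
      by (cases "u ! k") (auto simp: cylinder_automaton_def take_Suc_conv_app_nth)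
  qed
  then have "\<rho> u = Suc (length u)" by (metis order.refl take_all)
  with step[of u] show "t \<in> cylinder u a"
    by (auto simp: cylinder_automaton_def cylinder_def)
qed

lemma regular_tree_language_cylinder: "regular_tree_language (cylinder u a)"
  unfolding regular_tree_language_def
proof (intro exI conjI)
  show "cylinder u a = tree_lang (cylinder_automaton u a)"
    by (rule equalityI[OF cylinder_subset_tree_lang tree_lang_subset_cylinder])
qed (rule wf_mta_cylinder_automaton)

lemma cantor_closed_cylinder: "cantor_closed (cylinder u a)"
  unfolding cantor_closed_def
proof (intro allI impI)
  fix t :: "'a tree"
  assume "\<forall>n. \<exists>s\<in>cylinder u a. \<forall>v. length v < n \<longrightarrow> s v = t v"
  then obtain s where "s \<in> cylinder u a" and "s u = t u"
    by (meson lessI)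
  then show "t \<in> cylinder u a"
    by (simp add: cylinder_def)
qed

lemma countable_wf_mta: "countable {A :: 'a::finite muller_tree_automaton. wf_mta A}"
proof -
  define D :: "(nat set \<times> nat \<times> (nat \<times> 'a \<times> nat \<times> nat) set \<times> nat set set) set"
    where "D = Collect finite \<times> UNIV \<times> Collect finite \<times> {T. finite T \<and> T \<subseteq> Collect finite}"
  define mk :: "_ \<Rightarrow> 'a muller_tree_automaton"
    where "mk = (\<lambda>(Q, q\<^sub>0, \<Delta>, F). \<lparr>states = Q, init = q\<^sub>0, trans = \<Delta>, table = F\<rparr>)"
  have "countable D"
    unfolding D_def
    by (intro countable_SIGMA countable_Collect_finite countableI_type
        countable_Collect_finite_subset)
  moreover have "{A. wf_mta A} \<subseteq> mk ` D"
  proof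
    fix A :: "'a muller_tree_automaton"
    assume "A \<in> {A. wf_mta A}"
    then have Q: "finite (states A)"
      and \<Delta>: "trans A \<subseteq> states A \<times> UNIV \<times> states A \<times> states A"
      and F: "table A \<subseteq> Pow (states A)"
      by (simp_all add: wf_mta_def)
    have "finite (trans A)"
      using \<Delta> by (rule finite_subset) (simp add: Q)
    moreover have "finite (table A)" and "table A \<subseteq> Collect finite"
      using F Q by (auto intro: finite_subset)
    ultimately have "(states A, init A, trans A, table A) \<in> D"
      using Q by (simp add: D_def)
    moreover have "A = mk (states A, init A, trans A, table A)"
      by (cases A) (simp add: mk_def)
    ultimately show "A \<in> mk ` D" by blast
  qed
  ultimately show ?thesis
    by (blast intro: countable_subset countable_image)
qed

lemma countable_regular_tree_languages:
  "countable {L :: 'a::finite tree set. regular_tree_language L}"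
proof -
  have "{L. regular_tree_language L} \<subseteq> tree_lang ` {A :: 'a muller_tree_automaton. wf_mta A}"
    unfolding regular_tree_language_def by blast
  then show ?thesis
    by (rule countable_subset) (intro countable_image countable_wf_mta)
qed

theorem mainTheorem13:
  assumes "CARD('a::finite) \<ge> 2"
  shows "Polish_space (automatic_topology :: 'a tree topology)"
proof -
  define S :: "'a tree set set" where "S = {L. regular_tree_language L \<and> cantor_closed L}"
  have S: "countable S"
    using countable_regular_tree_languages by (rule countable_subset[rotated]) (auto simp: S_def)
  have cylinder_S: "cylinder u a \<in> S" for u a
    by (simp add: S_def regular_tree_language_cylinder cantor_closed_cylinder)
  have "topspace (topology_generated_by S) = UNIV"
    using cylinder_S[of "[]"] by (auto simp: cylinder_def)
  then have finer: "openin (topology_generated_by S) U" if "openin cantor_topology U" for U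
    using that cylinder_S by (blast intro: openin_if_cylinders_openin topology_generated_by_Basis)
  have closed: "closedin cantor_topology L" if "L \<in> S" for L
    using that by (simp add: S_def cantor_closed_imp_closedin)
  have "completely_metrizable_space (topology_generated_by S)"
    using completely_metrizable_space_cantor_topology S closed finer
    by (rule completely_metrizable_space_topology_generated_by_closedin)
  moreover have "separable_space (topology_generated_by S)"
    using S by (intro second_countable_imp_separable_space second_countable_topology_generated_by)
  ultimately show ?thesis
    unfolding Polish_space_def automatic_topology_def S_def by blast
qed

end
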